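(* For any finite simple graph $G$ of order $n$ with $v_{even}(G)=1$, $\gamma_s'(G)\le n-1$.
   Context: A signed edge domination function (SEDF) of $G$ is $f:E(G)\to\{1,-1\}$ with $\sum_{e'\in E_G(u)\cup E_G(v)}f(e')\ge1$ for every edge $uv$, where $E_G(x)$ is the set of edges incident with $x$; $\gamma_s'(G)$ is the minimum of $\sum_{e\in E(G)}f(e)$ over all SEDFs. $v_{even}(G)$ is the number of vertices of even degree in $G$. *)

theory Defs
  imports Main
begin

definition simple_graph :: "'a set \<Rightarrow> 'a set set \<Rightarrow> bool" where
  "simple_graph V E \<longleftrightarrow> finite V \<and> (\<forall>e\<in>E. e \<subseteq> V \<and> card e = 2)"

definition incident_edges :: "'a set set \<Rightarrow> 'a \<Rightarrow> 'a set set" where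
  "incident_edges E x = {e \<in> E. x \<in> e}"

definition degree :: "'a set set \<Rightarrow> 'a \<Rightarrow> nat" where
  "degree E x = card (incident_edges E x)"

definition v_even :: "'a set \<Rightarrow> 'a set set \<Rightarrow> nat" where
  "v_even V E = card {v \<in> V. even (degree E v)}"

definition is_SEDF :: "'a set set \<Rightarrow> ('a set \<Rightarrow> int) \<Rightarrow> bool" where
  "is_SEDF E f \<longleftrightarrow> (\<forall>e\<in>E. f e \<in> {1, -1}) \<and>
     (\<forall>u v. {u, v} \<in> E \<longrightarrow>
        (\<Sum>e'\<in>incident_edges E u \<union> incident_edges E v. f e') \<ge> 1)"

definition signed_edge_domination_number :: "'a set set \<Rightarrow> int" where
  "signed_edge_domination_number E = Min {(\<Sum>e\<in>E. f e) | f. is_SEDF E f}"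

end

(*
  Call f : E -> {1, -1} a positive signing if every non-isolated vertex has positive signed
  degree, the sum of f over its incident edges. A positive signing is an SEDF: for an edge uv
  the sum over E(u) \<union> E(v) is sd(u) + sd(v) - f(uv) >= 1 + 1 - 1.

  A positive signing of weight at most n - 1 is built by induction on |E|, keeping the invariant
  that at most one vertex has even degree. Suppose some edge vb has both ends of degree at least 3.
  Since at most one vertex has degree 2, there are neighbours a of v and c of b, all four distinct,
  such that ac is an edge only if a and c have degree at least 3. If ac is not an edge, replace the
  path avbc by the edge ac and sign the path s, -s, s, where s is the sign of ac; otherwise delete
  the 4-cycle avbc and sign it alternately. Both moves preserve signed degrees, weight and degree
  parities and isolate no vertex. If there is no such edge, every edge meets a vertex of degree at
  most 2, at most one of which has degree 2, and double counting gives |E| <= n - 1, so the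
  constant signing 1 works.
*)
theory Submission
  imports Defs
begin

lemma two_le_card_obtain:
  assumes "finite A" "2 \<le> card A"
  obtains x y where "x \<in> A" "y \<in> A" "x \<noteq> y"
  using assms card_le_Suc0_iff_eq[OF assms(1)] by fastforce

lemma simple_graph_finite_edges: "simple_graph V E \<Longrightarrow> finite E"
  unfolding simple_graph_def by (meson Pow_iff finite_Pow_iff finite_subset subsetI)

lemma simple_graph_edge_obtain:
  assumes "simple_graph V E" "e \<in> E"
  obtains p q where "e = {p, q}" "p \<noteq> q"
  using assms unfolding simple_graph_def by (meson card_2_iff)

lemma simple_graph_no_loop: "simple_graph V E \<Longrightarrow> {x, x} \<notin> E"
  unfolding simple_graph_def by fastforce

lemma simple_graph_two_le_card: "simple_graph V E \<Longrightarrow> e \<in> E \<Longrightarrow> 2 \<le> card V"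
  unfolding simple_graph_def by (metis card_mono)

lemma degree_pos_imp_vertex: "simple_graph V E \<Longrightarrow> 0 < degree E x \<Longrightarrow> x \<in> V"
  unfolding degree_def incident_edges_def simple_graph_def by (fastforce simp: card_gt_0_iff)

definition neighbours :: "'a set set \<Rightarrow> 'a \<Rightarrow> 'a set" where
  "neighbours E x = {y. {x, y} \<in> E}"

lemma mem_neighbours: "y \<in> neighbours E x \<longleftrightarrow> {x, y} \<in> E"
  unfolding neighbours_def by simp

lemma neighbours_sym: "y \<in> neighbours E x \<longleftrightarrow> x \<in> neighbours E y"
  by (simp add: mem_neighbours insert_commute)

lemma neighbours_subset: "simple_graph V E \<Longrightarrow> neighbours E x \<subseteq> V - {x}"
  unfolding neighbours_def simple_graph_def by fastforce

lemma self_notin_neighbours: "simple_graph V E \<Longrightarrow> x \<notin> neighbours E x"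
  using neighbours_subset[of V E x] by blast

lemma neighbours_finite: "simple_graph V E \<Longrightarrow> finite (neighbours E x)"
  using neighbours_subset unfolding simple_graph_def by (meson finite_Diff finite_subset)

lemma degree_eq_card_neighbours:
  assumes "simple_graph V E"
  shows "degree E x = card (neighbours E x)"
proof -
  have "bij_betw (\<lambda>y. {x, y}) (neighbours E x) (incident_edges E x)"
  proof (rule bij_betw_imageI)
    show "inj_on (\<lambda>y. {x, y}) (neighbours E x)"
      by (auto intro!: inj_onI simp: doubleton_eq_iff)
    show "(\<lambda>y. {x, y}) ` neighbours E x = incident_edges E x"
    proof
      show "incident_edges E x \<subseteq> (\<lambda>y. {x, y}) ` neighbours E x"
      proof
        fix e assume "e \<in> incident_edges E x"
        then have "e \<in> E" "x \<in> e" unfolding incident_edges_def by auto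
        then obtain y where "e = {x, y}"
          using simple_graph_edge_obtain[OF assms] by (metis insert_commute insertE singletonD)
        with \<open>e \<in> E\<close> show "e \<in> (\<lambda>y. {x, y}) ` neighbours E x"
          unfolding neighbours_def by auto
      qed
    qed (auto simp: neighbours_def incident_edges_def)
  qed
  then show ?thesis unfolding degree_def by (simp add: bij_betw_same_card)
qed

lemma card_le_degree: "simple_graph V E \<Longrightarrow> S \<subseteq> neighbours E x \<Longrightarrow> card S \<le> degree E x"
  by (simp add: degree_eq_card_neighbours card_mono neighbours_finite)

lemma degree_le_card_minus_one:
  assumes "simple_graph V E" "x \<in> V"
  shows "degree E x \<le> card V - 1"
proof -
  have "finite V" using assms(1) unfolding simple_graph_def by simp
  then have "card (neighbours E x) \<le> card (V - {x})"
    using neighbours_subset[OF assms(1)] by (intro card_mono) auto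
  then show ?thesis using assms \<open>finite V\<close> by (simp add: degree_eq_card_neighbours)
qed

lemma degree_two_unique:
  assumes sg: "simple_graph V E" and "card {x\<in>V. even (degree E x)} \<le> 1"
    and "degree E x = 2" "degree E y = 2"
  shows "x = y"
proof -
  have fin: "finite {x\<in>V. even (degree E x)}" using sg unfolding simple_graph_def by simp
  have "x \<in> V" "y \<in> V" using assms(3,4) degree_pos_imp_vertex[OF sg] by auto
  then show ?thesis using assms(2-4) card_le_Suc0_iff_eq[OF fin] by auto
qed

lemma sum_degree_eq_sum_card_inter:
  assumes "finite E" "finite S"
  shows "(\<Sum>x\<in>S. degree E x) = (\<Sum>e\<in>E. card (S \<inter> e))"
  unfolding degree_def incident_edges_def
  by (rule sum_multicount_gen[OF assms(2,1)]) (auto simp: Int_def conj_commute)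

lemma handshake:
  assumes "simple_graph V E"
  shows "(\<Sum>x\<in>V. degree E x) = 2 * card E"
proof -
  have "finite V" "finite E"
    using assms simple_graph_finite_edges unfolding simple_graph_def by auto
  moreover have "\<And>e. e \<in> E \<Longrightarrow> card (V \<inter> e) = 2"
    using assms unfolding simple_graph_def by (simp add: Int_absorb1)
  ultimately show ?thesis by (simp add: sum_degree_eq_sum_card_inter)
qed

lemma card_edges_le_sum_degree_cover:
  assumes "finite E" "finite S" "\<And>e. e \<in> E \<Longrightarrow> S \<inter> e \<noteq> {}"
  shows "card E \<le> (\<Sum>x\<in>S. degree E x)"
proof -
  have "card E = (\<Sum>e\<in>E. 1)" by simp
  also have "\<dots> \<le> (\<Sum>e\<in>E. card (S \<inter> e))"
    using assms by (intro sum_mono) (simp add: Suc_leI card_gt_0_iff)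
  finally show ?thesis using assms by (simp add: sum_degree_eq_sum_card_inter)
qed

lemma sum_degree_at_most_two_le:
  assumes "finite V" "card {x\<in>V. even (degree E x)} \<le> 1"
    and "Z \<subseteq> V" "\<And>x. x \<in> Z \<Longrightarrow> degree E x \<le> 2"
  shows "(\<Sum>x\<in>Z. degree E x) \<le> card Z + 1"
proof -
  have fin: "finite Z" using assms(1,3) by (rule finite_subset[rotated])
  have "(\<Sum>x\<in>Z. degree E x) \<le> (\<Sum>x\<in>Z. 1 + of_bool (even (degree E x)))"
  proof (rule sum_mono)
    fix x assume "x \<in> Z"
    then show "degree E x \<le> 1 + of_bool (even (degree E x))"
      using assms(4)[of x] by (cases "even (degree E x)") (auto elim: oddE)
  qed
  also have "\<dots> = card Z + card (Z \<inter> {x. even (degree E x)})"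
    using fin by (simp only: sum.distrib) simp
  also have "card (Z \<inter> {x. even (degree E x)}) \<le> card {x\<in>V. even (degree E x)}"
    using assms(1,3) by (intro card_mono) auto
  finally show ?thesis using assms(2) by linarith
qed

lemma card_edges_less_card_vertices:
  assumes sg: "simple_graph V E" and "V \<noteq> {}"
    and even_le: "card {x\<in>V. even (degree E x)} \<le> 1"
    and low: "\<And>e. e \<in> E \<Longrightarrow> \<exists>x\<in>e. degree E x \<le> 2"
  shows "card E + 1 \<le> card V"
proof -
  have fin: "finite V" "finite E"
    using sg simple_graph_finite_edges unfolding simple_graph_def by auto
  have sub: "\<And>e. e \<in> E \<Longrightarrow> e \<subseteq> V" using sg unfolding simple_graph_def by auto
  define Z where "Z = {x\<in>V. degree E x \<le> 2}"
  define I where "I = V - Z"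
  have "finite Z" "finite I" "Z \<subseteq> V" using fin unfolding Z_def I_def by auto
  have card_V: "card V = card Z + card I"
    using card_Diff_subset[OF \<open>finite Z\<close> \<open>Z \<subseteq> V\<close>] card_mono[OF fin(1) \<open>Z \<subseteq> V\<close>]
    unfolding I_def by simp
  have sum_Z: "(\<Sum>x\<in>Z. degree E x) \<le> card Z + 1"
    using fin(1) even_le by (rule sum_degree_at_most_two_le) (auto simp: Z_def)
  have "card E \<le> (\<Sum>x\<in>Z. degree E x)"
    using fin(2) \<open>finite Z\<close> by (rule card_edges_le_sum_degree_cover) (use low sub in \<open>force simp: Z_def\<close>)
  with sum_Z have by_Z: "card E \<le> card Z + 1" by linarith
  have "(\<Sum>x\<in>I. degree E x) \<le> card I * (card V - 1)"
    using sum_bounded_above[of I "degree E" "card V - 1"] degree_le_card_minus_one[OF sg]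
    by (auto simp: I_def)
  moreover have "2 * card E = (\<Sum>x\<in>Z. degree E x) + (\<Sum>x\<in>I. degree E x)"
    using handshake[OF sg] fin(1) \<open>Z \<subseteq> V\<close> unfolding I_def by (metis sum.subset_diff add.commute)
  ultimately have by_V: "2 * card E \<le> card Z + 1 + card I * (card V - 1)"
    using sum_Z by linarith
  consider "card I = 0" | "card I = 1" | "card I \<ge> 2" by linarith
  then show ?thesis
  proof cases
    case 1
    show ?thesis
    proof (cases "E = {}")
      case True
      then show ?thesis using fin(1) \<open>V \<noteq> {}\<close> by (simp add: Suc_leI card_gt_0_iff)
    next
      case False
      then have "2 \<le> card V" using simple_graph_two_le_card[OF sg] by blast
      then show ?thesis using by_V card_V 1 by simp
    qed
  qed (use by_V by_Z card_V in auto)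
qed

definition signed_degree :: "'a set set \<Rightarrow> ('a set \<Rightarrow> int) \<Rightarrow> 'a \<Rightarrow> int" where
  "signed_degree E f x = (\<Sum>e\<in>incident_edges E x. f e)"

lemma signed_degree_one: "signed_degree E (\<lambda>_. 1) x = int (degree E x)"
  unfolding signed_degree_def degree_def by simp

lemma signed_degree_empty [simp]: "signed_degree {} f x = 0"
  unfolding signed_degree_def incident_edges_def by simp

lemma signed_degree_insert [simp]:
  "finite E \<Longrightarrow> e \<notin> E \<Longrightarrow>
     signed_degree (insert e E) f x = (if x \<in> e then f e else 0) + signed_degree E f x"
proof -
  assume "finite E" "e \<notin> E"
  moreover have "incident_edges (insert e E) x =
      (if x \<in> e then insert e (incident_edges E x) else incident_edges E x)"
    unfolding incident_edges_def by auto
  ultimately show ?thesis unfolding signed_degree_def by (simp add: incident_edges_def)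
qed

lemma signed_degree_cong: "(\<And>e. e \<in> E \<Longrightarrow> f e = g e) \<Longrightarrow> signed_degree E f x = signed_degree E g x"
  unfolding signed_degree_def incident_edges_def by (auto intro!: sum.cong)

lemma signed_degree_Un:
  assumes "finite A" "finite B" "A \<inter> B = {}"
  shows "signed_degree (A \<union> B) f x = signed_degree A f x + signed_degree B f x"
proof -
  have "incident_edges (A \<union> B) x = incident_edges A x \<union> incident_edges B x"
    unfolding incident_edges_def by auto
  then show ?thesis
    using assms unfolding signed_degree_def by (simp add: incident_edges_def sum.union_disjoint disjoint_iff)
qed

lemma degree_Un:
  "finite A \<Longrightarrow> finite B \<Longrightarrow> A \<inter> B = {} \<Longrightarrow> degree (A \<union> B) x = degree A x + degree B x"
  using signed_degree_Un[of A B "\<lambda>_. 1" x] by (simp add: signed_degree_one)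

lemma degree_empty [simp]: "degree {} x = 0"
  using signed_degree_empty[of "\<lambda>_. 1" x] by (simp only: signed_degree_one of_nat_eq_0_iff)

lemma degree_insert [simp]:
  "finite E \<Longrightarrow> e \<notin> E \<Longrightarrow> degree (insert e E) x = (if x \<in> e then Suc (degree E x) else degree E x)"
  using signed_degree_insert[of E e "\<lambda>_. 1" x] by (cases "x \<in> e") (auto simp: signed_degree_one)

definition positive_signing :: "'a set set \<Rightarrow> ('a set \<Rightarrow> int) \<Rightarrow> bool" where
  "positive_signing E f \<longleftrightarrow>
     (\<forall>e\<in>E. f e \<in> {1, -1}) \<and> (\<forall>x. 0 < degree E x \<longrightarrow> 0 < signed_degree E f x)"

lemma positive_signing_one: "positive_signing E (\<lambda>_. 1)"
  unfolding positive_signing_def by (simp add: signed_degree_one)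

lemma incident_edges_Int_edge:
  assumes "simple_graph V E" "{u, v} \<in> E"
  shows "incident_edges E u \<inter> incident_edges E v = {{u, v}}"
proof -
  have "u \<noteq> v" using simple_graph_no_loop assms by fastforce
  have "e = {u, v}" if "e \<in> E" "u \<in> e" "v \<in> e" for e
    using simple_graph_edge_obtain[OF assms(1) that(1)] that(2,3) \<open>u \<noteq> v\<close> by auto
  then show ?thesis using assms(2) unfolding incident_edges_def by blast
qed

lemma positive_signing_is_SEDF:
  assumes sg: "simple_graph V E" and f: "positive_signing E f"
  shows "is_SEDF E f"
  unfolding is_SEDF_def
proof (intro conjI allI impI)
  show "\<forall>e\<in>E. f e \<in> {1, -1}" using f unfolding positive_signing_def by blast
  fix u v assume uv: "{u, v} \<in> E"
  let ?S = "\<lambda>x. incident_edges E x"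
  have fin: "finite (?S x)" for x
    using simple_graph_finite_edges[OF sg] unfolding incident_edges_def by simp
  have "0 < degree E x" if "x \<in> {u, v}" for x
    using uv that card_gt_0_iff fin unfolding degree_def incident_edges_def by fastforce
  then have "0 < signed_degree E f u" "0 < signed_degree E f v"
    using f unfolding positive_signing_def by blast+
  moreover have "(\<Sum>e\<in>?S u \<union> ?S v. f e) + (\<Sum>e\<in>?S u \<inter> ?S v. f e) =
      signed_degree E f u + signed_degree E f v"
    unfolding signed_degree_def by (rule sum.union_inter[OF fin fin])
  then have "(\<Sum>e\<in>?S u \<union> ?S v. f e) + f {u, v} = signed_degree E f u + signed_degree E f v"
    using incident_edges_Int_edge[OF sg uv] by simp
  moreover have "f {u, v} \<le> 1" using f uv unfolding positive_signing_def by auto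
  ultimately show "1 \<le> (\<Sum>e\<in>?S u \<union> ?S v. f e)" by linarith
qed

lemma signed_edge_domination_number_le:
  assumes "finite E" "is_SEDF E f"
  shows "signed_edge_domination_number E \<le> (\<Sum>e\<in>E. f e)"
proof -
  let ?W = "{(\<Sum>e\<in>E. g e) | g. is_SEDF E g}"
  have "\<bar>\<Sum>e\<in>E. g e\<bar> \<le> int (card E)" if "is_SEDF E g" for g
  proof -
    have "\<bar>\<Sum>e\<in>E. g e\<bar> \<le> (\<Sum>e\<in>E. \<bar>g e\<bar>)" by (rule sum_abs)
    also have "\<dots> = (\<Sum>e\<in>E. 1)" using that unfolding is_SEDF_def by (intro sum.cong) auto
    finally show ?thesis by simp
  qed
  then have "?W \<subseteq> {- int (card E) .. int (card E)}" by fastforce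
  then have "finite ?W" by (rule finite_subset) simp
  then show ?thesis
    using assms(2) unfolding signed_edge_domination_number_def by (auto intro: Min_le)
qed

definition signing_reduction :: "'a set set \<Rightarrow> 'a set set \<Rightarrow> bool" where
  "signing_reduction E E' \<longleftrightarrow> card E' < card E \<and> (\<forall>x. even (degree E' x) = even (degree E x)) \<and>
     (\<forall>f'. positive_signing E' f' \<longrightarrow> (\<exists>f. positive_signing E f \<and> (\<Sum>e\<in>E. f e) = (\<Sum>e\<in>E'. f' e)))"

lemma replacement_signing_reduction:
  assumes fin: "finite E" "finite K'" and "K \<subseteq> E" "K' \<inter> E = {}" "card K' < card K"
    and parity: "\<And>x. even (degree K' x) = even (degree K x)"
    and keeps_edge: "\<And>x. degree K' x < degree K x \<Longrightarrow> degree K x < degree E x"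
    and local_signing: "\<And>f'. \<forall>e\<in>K'. f' e \<in> {1, -1} \<Longrightarrow> \<exists>g. (\<forall>e\<in>K. g e \<in> {1, -1}) \<and>
          (\<forall>x. signed_degree K g x = signed_degree K' f' x) \<and> (\<Sum>e\<in>K. g e) = (\<Sum>e\<in>K'. f' e)"
  shows "signing_reduction E ((E - K) \<union> K')"
proof -
  define C where "C = E - K"
  have E_split: "E = C \<union> K" and disj: "C \<inter> K = {}" "C \<inter> K' = {}"
    using assms unfolding C_def by auto
  have fin_CK: "finite C" "finite K" using fin \<open>K \<subseteq> E\<close> unfolding C_def by (auto intro: finite_subset)
  have deg_E: "degree E x = degree C x + degree K x" for x
    using degree_Un[OF fin_CK disj(1)] E_split by simp
  have deg_E': "degree (C \<union> K') x = degree C x + degree K' x" for x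
    by (rule degree_Un[OF fin_CK(1) fin(2) disj(2)])
  have "card (C \<union> K') < card E"
    using assms fin_CK disj E_split by (simp add: card_Un_disjoint)
  moreover have "even (degree (C \<union> K') x) = even (degree E x)" for x
    using deg_E deg_E' parity by simp
  moreover have "\<exists>f. positive_signing E f \<and> (\<Sum>e\<in>E. f e) = (\<Sum>e\<in>C \<union> K'. f' e)"
    if f': "positive_signing (C \<union> K') f'" for f'
  proof -
    have "\<forall>e\<in>K'. f' e \<in> {1, -1}" using f' unfolding positive_signing_def by blast
    then obtain g where g: "\<forall>e\<in>K. g e \<in> {1, -1}" "\<And>x. signed_degree K g x = signed_degree K' f' x"
        "(\<Sum>e\<in>K. g e) = (\<Sum>e\<in>K'. f' e)"
      using local_signing by blast
    define f where "f e = (if e \<in> K then g e else f' e)" for e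
    have "signed_degree E f x = signed_degree C f' x + signed_degree K g x" for x
      using signed_degree_Un[OF fin_CK disj(1)] disj(1) E_split
      by (auto simp: f_def intro!: arg_cong2[where f = "(+)"] signed_degree_cong)
    then have sd: "signed_degree E f x = signed_degree (C \<union> K') f' x" for x
      using g(2) signed_degree_Un[OF fin_CK(1) fin(2) disj(2)] by simp
    have "(\<Sum>e\<in>E. f e) = (\<Sum>e\<in>C. f' e) + (\<Sum>e\<in>K. g e)"
      using E_split disj(1) fin_CK by (simp add: sum.union_disjoint f_def disjoint_iff)
    also have "\<dots> = (\<Sum>e\<in>C \<union> K'. f' e)"
      using g(3) fin_CK fin disj(2) by (simp add: sum.union_disjoint)
    finally have weight: "(\<Sum>e\<in>E. f e) = (\<Sum>e\<in>C \<union> K'. f' e)" .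
    have "0 < degree (C \<union> K') x" if "0 < degree E x" for x
      using that keeps_edge[of x] deg_E deg_E' by (cases "degree K' x < degree K x") auto
    then have "positive_signing E f"
      using f' g(1) sd E_split unfolding positive_signing_def f_def by auto
    with weight show ?thesis by blast
  qed
  ultimately show ?thesis unfolding signing_reduction_def C_def by blast
qed

lemma path_contraction_signing_reduction:
  assumes "finite E" "{a, v} \<in> E" "{v, b} \<in> E" "{b, c} \<in> E" "{a, c} \<notin> E"
    and "distinct [a, v, b, c]" "3 \<le> degree E v" "3 \<le> degree E b"
  shows "signing_reduction E ((E - {{a, v}, {v, b}, {b, c}}) \<union> {{a, c}})"
proof (rule replacement_signing_reduction)
  let ?K = "{{a, v}, {v, b}, {b, c}}" and ?K' = "{{a, c}}"
  have distinct_edges: "{a, v} \<notin> {{v, b}, {b, c}}" "{v, b} \<noteq> {b, c}"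
    using assms(6) by (auto simp: doubleton_eq_iff)
  have signed_degree_K: "signed_degree ?K g x = (if x \<in> {a, v} then g {a, v} else 0)
      + (if x \<in> {v, b} then g {v, b} else 0) + (if x \<in> {b, c} then g {b, c} else 0)" for g x
    using distinct_edges by (simp add: add.assoc)
  have sum_K: "(\<Sum>e\<in>?K. g e) = g {a, v} + g {v, b} + g {b, c}" for g :: "'a set \<Rightarrow> int"
    using distinct_edges by (simp add: add.assoc)
  have deg_K: "degree ?K x = (if x \<in> {v, b} then 2 else if x \<in> {a, c} then 1 else 0)" for x
    using distinct_edges by simp (use assms(6) in auto)
  have deg_K': "degree ?K' x = (if x \<in> {a, c} then 1 else 0)" for x
    by simp
  show "card ?K' < card ?K" using distinct_edges by simp
  show "even (degree ?K' x) = even (degree ?K x)" for x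
    using assms(6) by (auto simp: deg_K deg_K')
  show "degree ?K x < degree E x" if "degree ?K' x < degree ?K x" for x
    using that assms(6-8) by (auto simp: deg_K deg_K' split: if_splits)
  show "\<exists>g. (\<forall>e\<in>?K. g e \<in> {1, -1}) \<and> (\<forall>x. signed_degree ?K g x = signed_degree ?K' f' x) \<and>
      (\<Sum>e\<in>?K. g e) = (\<Sum>e\<in>?K'. f' e)"
    if "\<forall>e\<in>?K'. f' e \<in> {1, -1}" for f'
  proof (intro exI conjI allI)
    let ?g = "\<lambda>e. if e = {v, b} then - f' {a, c} else f' {a, c}"
    have g_values: "?g {a, v} = f' {a, c}" "?g {v, b} = - f' {a, c}" "?g {b, c} = f' {a, c}"
      using assms(6) by (auto simp: doubleton_eq_iff)
    show "\<forall>e\<in>?K. ?g e \<in> {1, -1}" using that by auto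
    show "signed_degree ?K ?g x = signed_degree ?K' f' x" for x
      unfolding signed_degree_K g_values using assms(6) by auto
    show "(\<Sum>e\<in>?K. ?g e) = (\<Sum>e\<in>?K'. f' e)"
      unfolding sum_K g_values by simp
  qed
qed (use assms in auto)

lemma four_cycle_signing_reduction:
  assumes "finite E" "{a, v} \<in> E" "{v, b} \<in> E" "{b, c} \<in> E" "{c, a} \<in> E"
    and "distinct [a, v, b, c]" "3 \<le> degree E a" "3 \<le> degree E v" "3 \<le> degree E b" "3 \<le> degree E c"
  shows "signing_reduction E (E - {{a, v}, {v, b}, {b, c}, {c, a}})"
proof (rule replacement_signing_reduction[where K' = "{}", simplified Un_empty_right])
  let ?K = "{{a, v}, {v, b}, {b, c}, {c, a}}"
  have distinct_edges:
    "{a, v} \<notin> {{v, b}, {b, c}, {c, a}}" "{v, b} \<notin> {{b, c}, {c, a}}" "{b, c} \<noteq> {c, a}"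
    using assms(6) by (auto simp: doubleton_eq_iff)
  have signed_degree_K: "signed_degree ?K g x = (if x \<in> {a, v} then g {a, v} else 0)
      + (if x \<in> {v, b} then g {v, b} else 0) + (if x \<in> {b, c} then g {b, c} else 0)
      + (if x \<in> {c, a} then g {c, a} else 0)" for g x
    using distinct_edges by (simp add: add.assoc)
  have sum_K: "(\<Sum>e\<in>?K. g e) = g {a, v} + g {v, b} + g {b, c} + g {c, a}" for g :: "'a set \<Rightarrow> int"
    using distinct_edges by (simp add: add.assoc)
  have deg_K: "degree ?K x = (if x \<in> {a, v, b, c} then 2 else 0)" for x
    using distinct_edges by simp (use assms(6) in auto)
  show "card {} < card ?K" using distinct_edges by simp
  show "even (degree {} x) = even (degree ?K x)" for x
    by (simp add: deg_K)
  show "degree ?K x < degree E x" if "degree {} x < degree ?K x" for x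
    using that assms(6-10) by (auto simp: deg_K split: if_splits)
  show "\<exists>g. (\<forall>e\<in>?K. g e \<in> {1, -1}) \<and> (\<forall>x. signed_degree ?K g x = signed_degree {} f' x) \<and>
      (\<Sum>e\<in>?K. g e) = (\<Sum>e\<in>{}. f' e)" for f'
  proof (intro exI conjI allI)
    let ?g = "\<lambda>e. if e = {a, v} \<or> e = {b, c} then 1 else - 1 :: int"
    have g_values: "?g {a, v} = 1" "?g {v, b} = - 1" "?g {b, c} = 1" "?g {c, a} = - 1"
      using assms(6) by (auto simp: doubleton_eq_iff)
    show "\<forall>e\<in>?K. ?g e \<in> {1, -1}" by auto
    show "signed_degree ?K ?g x = signed_degree {} f' x" for x
      unfolding signed_degree_K g_values using assms(6) by auto
    show "(\<Sum>e\<in>?K. ?g e) = (\<Sum>e\<in>{}. f' e)"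
      unfolding sum_K g_values by simp
  qed
qed (use assms in auto)

definition reducible_path :: "'a set set \<Rightarrow> 'a \<Rightarrow> 'a \<Rightarrow> 'a \<Rightarrow> 'a \<Rightarrow> bool" where
  "reducible_path E a v b c \<longleftrightarrow> {a, v} \<in> E \<and> {v, b} \<in> E \<and> {b, c} \<in> E \<and> distinct [a, v, b, c] \<and>
     3 \<le> degree E v \<and> 3 \<le> degree E b \<and> ({a, c} \<in> E \<longrightarrow> 3 \<le> degree E a \<and> 3 \<le> degree E c)"

lemma reducible_pathI:
  assumes sg: "simple_graph V E" and vb: "{v, b} \<in> E" "3 \<le> degree E v" "3 \<le> degree E b"
    and a: "a \<in> neighbours E v - {b}" and c: "c \<in> neighbours E b - {v}" and "a \<noteq> c"
    and chord: "{a, c} \<in> E \<Longrightarrow> degree E a \<noteq> 2 \<and> degree E c \<noteq> 2"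
  shows "reducible_path E a v b c"
proof -
  note no_loop = self_notin_neighbours[OF sg]
  have "b \<in> neighbours E v" "v \<in> neighbours E a" "c \<in> neighbours E b"
    using vb(1) a c neighbours_sym[of a E v] by (auto simp: mem_neighbours)
  then have "{a, v} \<in> E" "{b, c} \<in> E" by (simp_all add: mem_neighbours)
  moreover have "distinct [a, v, b, c]"
    using a c \<open>a \<noteq> c\<close> \<open>b \<in> neighbours E v\<close> no_loop by auto
  moreover have "3 \<le> degree E a \<and> 3 \<le> degree E c" if "{a, c} \<in> E"
  proof -
    have "{v, c} \<subseteq> neighbours E a" "{b, a} \<subseteq> neighbours E c"
      using \<open>v \<in> neighbours E a\<close> \<open>c \<in> neighbours E b\<close> that neighbours_sym[of c E b]
        neighbours_sym[of c E a] by (auto simp: mem_neighbours)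
    then have "card {v, c} \<le> degree E a" "card {b, a} \<le> degree E c"
      using card_le_degree[OF sg] by blast+
    then show ?thesis using chord that \<open>distinct [a, v, b, c]\<close> by auto
  qed
  ultimately show ?thesis using vb unfolding reducible_path_def by blast
qed

lemma reducible_path_exists:
  assumes sg: "simple_graph V E"
    and two_unique: "\<And>x y. degree E x = 2 \<Longrightarrow> degree E y = 2 \<Longrightarrow> x = y"
    and vb: "{v, b} \<in> E" and "3 \<le> degree E v" "3 \<le> degree E b"
  obtains a c where "reducible_path E a v b c"
proof -
  let ?A = "neighbours E v - {b}" and ?C = "neighbours E b - {v}"
  have path: "reducible_path E x v b y"
    if "x \<in> ?A" "y \<in> ?C" "x \<noteq> y" "{x, y} \<in> E \<Longrightarrow> degree E x \<noteq> 2 \<and> degree E y \<noteq> 2" for x y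
    using reducible_pathI[OF sg vb assms(4,5) that] .
  have "b \<in> neighbours E v" "v \<in> neighbours E b"
    using vb neighbours_sym[of b E v] by (auto simp: mem_neighbours)
  then have "2 \<le> card ?A" "2 \<le> card ?C"
    using assms(4,5) neighbours_finite[OF sg] by (simp_all add: degree_eq_card_neighbours[OF sg])
  then obtain a a' where a: "a \<in> ?A" "a' \<in> ?A" "a \<noteq> a'" "degree E a \<noteq> 2"
    using two_le_card_obtain[of ?A] neighbours_finite[OF sg] two_unique by (metis finite_Diff)
  obtain c0 c1 where c01: "c0 \<in> ?C" "c1 \<in> ?C" "c0 \<noteq> c1"
    using two_le_card_obtain[of ?C] \<open>2 \<le> card ?C\<close> neighbours_finite[OF sg] by blast
  obtain c where c: "c \<in> ?C" "c \<noteq> a" using c01 by blast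
  show thesis
  proof (cases "{a, c} \<in> E \<and> degree E c = 2")
    case False
    then show thesis using path[of a c] a c that by blast
  next
    case chord: True
    obtain c' where c': "c' \<in> ?C" "c' \<noteq> c" using c01 by blast
    have "degree E c' \<noteq> 2" using c' chord two_unique by blast
    show thesis
    proof (cases "c' = a")
      case False
      then show thesis using path[of a c'] a c' \<open>degree E c' \<noteq> 2\<close> that by blast
    next
      case True
      have "a' \<noteq> c"
      proof
        assume "a' = c"
        then have "{v, b, a} \<subseteq> neighbours E c"
          using a c chord neighbours_sym[of c E v] neighbours_sym[of c E b] neighbours_sym[of c E a]
          by (auto simp: mem_neighbours)
        moreover have "distinct [v, b, a]"
          using a(1) \<open>b \<in> neighbours E v\<close> self_notin_neighbours[OF sg] by auto
        ultimately have "3 \<le> degree E c" using card_le_degree[OF sg, of "{v, b, a}" c] by simp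
        then show False using chord by simp
      qed
      then have "degree E a' \<noteq> 2" using chord two_unique by blast
      then show thesis using path[of a' a] a c' True that by blast
    qed
  qed
qed

lemma signing_reduction_exists:
  assumes sg: "simple_graph V E" and path: "reducible_path E a v b c"
  obtains E' where "simple_graph V E'" "signing_reduction E E'"
proof -
  have fin: "finite E" by (rule simple_graph_finite_edges[OF sg])
  have path_edges: "{a, v} \<in> E" "{v, b} \<in> E" "{b, c} \<in> E" "distinct [a, v, b, c]"
      "3 \<le> degree E v" "3 \<le> degree E b"
    and chord: "{a, c} \<in> E \<Longrightarrow> 3 \<le> degree E a \<and> 3 \<le> degree E c"
    using path unfolding reducible_path_def by auto
  show thesis
  proof (cases "{a, c} \<in> E")
    case True
    let ?E' = "E - {{a, v}, {v, b}, {b, c}, {c, a}}"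
    have "signing_reduction E ?E'"
      using four_cycle_signing_reduction[OF fin path_edges(1-3) _ path_edges(4) _ path_edges(5,6)]
        chord[OF True] True by (simp add: insert_commute)
    moreover have "simple_graph V ?E'" using sg unfolding simple_graph_def by blast
    ultimately show thesis by (rule that[rotated])
  next
    case False
    let ?E' = "(E - {{a, v}, {v, b}, {b, c}}) \<union> {{a, c}}"
    have "signing_reduction E ?E'"
      by (rule path_contraction_signing_reduction[OF fin path_edges(1-3) False path_edges(4-6)])
    moreover have "simple_graph V ?E'"
      using sg path_edges unfolding simple_graph_def by auto
    ultimately show thesis by (rule that[rotated])
  qed
qed

lemma positive_signing_weight_le:
  assumes "simple_graph V E" "V \<noteq> {}" "card {x\<in>V. even (degree E x)} \<le> 1"
  shows "\<exists>f. positive_signing E f \<and> (\<Sum>e\<in>E. f e) \<le> int (card V) - 1"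
  using assms
proof (induction "card E" arbitrary: E rule: less_induct)
  case less
  show ?case
  proof (cases "\<exists>v b. {v, b} \<in> E \<and> 3 \<le> degree E v \<and> 3 \<le> degree E b")
    case True
    then obtain v b where "{v, b} \<in> E" "3 \<le> degree E v" "3 \<le> degree E b" by blast
    then obtain a c where "reducible_path E a v b c"
      using reducible_path_exists[OF less.prems(1)] degree_two_unique[OF less.prems(1,3)] by blast
    then obtain E' where E': "simple_graph V E'" "signing_reduction E E'"
      using signing_reduction_exists[OF less.prems(1)] by blast
    then have "card E' < card E" "{x\<in>V. even (degree E' x)} = {x\<in>V. even (degree E x)}"
      unfolding signing_reduction_def by auto
    then obtain f' where "positive_signing E' f'" "(\<Sum>e\<in>E'. f' e) \<le> int (card V) - 1"
      using less.hyps E'(1) less.prems(2,3) by metis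
    then show ?thesis using E'(2) unfolding signing_reduction_def by metis
  next
    case False
    have "\<exists>x\<in>e. degree E x \<le> 2" if "e \<in> E" for e
    proof -
      obtain p q where "e = {p, q}" using simple_graph_edge_obtain[OF less.prems(1) \<open>e \<in> E\<close>] by blast
      then have "degree E p \<le> 2 \<or> degree E q \<le> 2" using False \<open>e \<in> E\<close> by force
      then show ?thesis using \<open>e = {p, q}\<close> by blast
    qed
    then have "card E + 1 \<le> card V"
      using card_edges_less_card_vertices less.prems by blast
    then show ?thesis using positive_signing_one by fastforce
  qed
qed

theorem mainTheorem8:
  fixes V :: "'a set" and E :: "'a set set"
  assumes "simple_graph V E"
    and "v_even V E = 1"
  shows "signed_edge_domination_number E \<le> int (card V) - 1"
proof -
  have "card {x\<in>V. even (degree E x)} \<le> 1" "V \<noteq> {}"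
    using assms(2) unfolding v_even_def by auto
  then obtain f where f: "positive_signing E f" "(\<Sum>e\<in>E. f e) \<le> int (card V) - 1"
    using positive_signing_weight_le assms(1) by blast
  have "is_SEDF E f" by (rule positive_signing_is_SEDF[OF assms(1) f(1)])
  then have "signed_edge_domination_number E \<le> (\<Sum>e\<in>E. f e)"
    by (rule signed_edge_domination_number_le[OF simple_graph_finite_edges[OF assms(1)]])
  with f(2) show ?thesis by linarith
qed

end
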